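(* Let $1 < p < \infty$ and let $\lambda, \mu, \nu, \alpha$ be real numbers with $\alpha + 1 < p(\mu + 1)$. Let $$\mathcal{H}_{\lambda,\mu,\nu}(a)(n) = \sum_{m=1}^{\infty} \frac{m^{\mu} n^{\nu}}{(m+n)^{\lambda}} a_m, \quad n \in \mathbb{N}.$$ Then $\mathcal{H}_{\lambda,\mu,\nu}$ is bounded from $l^p_\alpha$ to $l^\infty$ if and only if $$\lambda \geq \mu + \nu + 1 - \frac{\alpha+1}{p} \quad\text{and}\quad p(\mu + 1 - \lambda) < \alpha + 1.$$
   Context: $l^p_\alpha$ is the space of real sequences $a=\{a_m\}_{m\ge1}$ with $\|a\|_{p,\alpha} = \left(\sum_{m=1}^\infty m^\alpha |a_m|^p\right)^{1/p} < \infty$; $l^\infty$ is the space of real sequences with $\|a\|_\infty = \sup_{m} |a_m| < \infty$. Bounded means: for every $a \in l^p_\alpha$ the defining series converge, the image lies in $l^\infty$, and $\|\mathcal{H}_{\lambda,\mu,\nu} a\|_\infty \le C\|a\|_{p,\alpha}$ for a constant $C$ independent of $a$. *)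

theory Defs
  imports "HOL-Analysis.Analysis"
begin

text \<open>Sequences a = (a_m)_{m>=1} are modelled as functions nat => real;
  only the values at indices m >= 1 are relevant (a 0 is ignored).\<close>

definition in_lpw :: "real \<Rightarrow> real \<Rightarrow> (nat \<Rightarrow> real) \<Rightarrow> bool" where
  "in_lpw p \<alpha> a \<longleftrightarrow> summable (\<lambda>k. real (Suc k) powr \<alpha> * \<bar>a (Suc k)\<bar> powr p)"

definition lpw_norm :: "real \<Rightarrow> real \<Rightarrow> (nat \<Rightarrow> real) \<Rightarrow> real" where
  "lpw_norm p \<alpha> a = (\<Sum>k. real (Suc k) powr \<alpha> * \<bar>a (Suc k)\<bar> powr p) powr (1 / p)"

definition H_term :: "real \<Rightarrow> real \<Rightarrow> real \<Rightarrow> (nat \<Rightarrow> real) \<Rightarrow> nat \<Rightarrow> nat \<Rightarrow> real" where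
  "H_term lam \<mu> \<nu> a n m =
     real m powr \<mu> * real n powr \<nu> / (real m + real n) powr lam * a m"

definition H_op :: "real \<Rightarrow> real \<Rightarrow> real \<Rightarrow> (nat \<Rightarrow> real) \<Rightarrow> nat \<Rightarrow> real" where
  "H_op lam \<mu> \<nu> a n = (\<Sum>k. H_term lam \<mu> \<nu> a n (Suc k))"

text \<open>Boundedness from l^p_alpha to l^infinity: all defining series converge,
  and sup_n |H a n| <= C ||a||_{p,alpha} (which also gives H a in l^infinity).\<close>
definition H_bounded_lpw_linf :: "real \<Rightarrow> real \<Rightarrow> real \<Rightarrow> real \<Rightarrow> real \<Rightarrow> bool" where
  "H_bounded_lpw_linf lam \<mu> \<nu> p \<alpha> \<longleftrightarrow>
     (\<exists>C. \<forall>a. in_lpw p \<alpha> a \<longrightarrow>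
        (\<forall>n\<ge>1. summable (\<lambda>k. H_term lam \<mu> \<nu> a n (Suc k))) \<and>
        (\<forall>n\<ge>1. \<bar>H_op lam \<mu> \<nu> a n\<bar> \<le> C * lpw_norm p \<alpha> a))"

end

theory Submission
  imports Defs "HOL-Real_Asymp.Real_Asymp"
begin

(*
  Writing x_m = m^(alpha/p) a_m identifies l^p_alpha isometrically with l^p and turns
  H(a)(n) into the pairing of x with the row K_n(m) = m^(mu - alpha/p) n^nu / (m + n)^lambda.
  By Hoelder's inequality, and its sharpness on the test sequences x = K_n^(q-1) cut off at
  finite length, H maps l^p_alpha boundedly into l^infinity iff the l^q norms of the rows
  are bounded uniformly in n, where q is the conjugate exponent.

  Now K_n(m)^q = m^b n^g / (m + n)^d with b = q (mu - alpha/p) > -1, g = q nu, d = q lambda.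
  Splitting the sum over m at m = n and comparing with power sums bounds it by a constant
  times n^(b + g + 1 - d) when d > b + 1. Conversely, the row n = 1 is comparable to
  m^(b - d), which is summable only if d > b + 1, and the block n <= m <= 2n alone
  contributes a multiple of n^(b + g + 1 - d), which stays bounded only if b + g + 1 <= d.
*)

lemma Hoelder_inequality_suminf:
  fixes x y :: "nat \<Rightarrow> real"
  assumes p: "1 < p" and q: "1 < q" and pq: "1/p + 1/q = 1"
    and x: "summable (\<lambda>k. \<bar>x k\<bar> powr p)" and y: "summable (\<lambda>k. \<bar>y k\<bar> powr q)"
  shows "summable (\<lambda>k. \<bar>x k * y k\<bar>)"
    and "(\<Sum>k. \<bar>x k * y k\<bar>) \<le> (\<Sum>k. \<bar>x k\<bar> powr p) powr (1/p) * (\<Sum>k. \<bar>y k\<bar> powr q) powr (1/q)"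
proof -
  have Young: "\<bar>x k\<bar> * \<bar>y k\<bar> \<le> \<bar>x k\<bar> powr p / p + \<bar>y k\<bar> powr q / q" for k
    by (rule Youngs_inequality[OF p q pq]) auto
  show xy: "summable (\<lambda>k. \<bar>x k * y k\<bar>)"
  proof (rule summable_comparison_test')
    show "summable (\<lambda>k. \<bar>x k\<bar> powr p / p + \<bar>y k\<bar> powr q / q)"
      using x y by (intro summable_add summable_divide)
    show "norm \<bar>x k * y k\<bar> \<le> \<bar>x k\<bar> powr p / p + \<bar>y k\<bar> powr q / q" for k
      using Young[of k] by (simp add: abs_mult)
  qed
  define A where "A = (\<Sum>k. \<bar>x k\<bar> powr p)"
  define B where "B = (\<Sum>k. \<bar>y k\<bar> powr q)"
  have "A \<ge> 0" "B \<ge> 0"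
    unfolding A_def B_def using x y by (auto intro: suminf_nonneg)
  show "(\<Sum>k. \<bar>x k * y k\<bar>) \<le> A powr (1/p) * B powr (1/q)"
  proof (cases "A = 0 \<or> B = 0")
    case True
    then have "x = (\<lambda>_. 0) \<or> y = (\<lambda>_. 0)"
      using suminf_eq_zero_iff[OF x] suminf_eq_zero_iff[OF y] by (auto simp: A_def B_def fun_eq_iff)
    then show ?thesis by auto
  next
    case False
    with \<open>A \<ge> 0\<close> \<open>B \<ge> 0\<close> have "A > 0" "B > 0" by auto
    define a where "a = A powr (1/p)"
    define b where "b = B powr (1/q)"
    have "a > 0" "b > 0" "a powr p = A" "b powr q = B"
      using \<open>A > 0\<close> \<open>B > 0\<close> p q by (auto simp: a_def b_def powr_powr)
    have "\<bar>x k * y k\<bar> / (a * b) \<le> \<bar>x k\<bar> powr p / (A * p) + \<bar>y k\<bar> powr q / (B * q)" for k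
      using Youngs_inequality[OF p q pq, of "\<bar>x k\<bar> / a" "\<bar>y k\<bar> / b"] \<open>a > 0\<close> \<open>b > 0\<close>
        \<open>a powr p = A\<close> \<open>b powr q = B\<close>
      by (simp add: abs_mult powr_divide)
    moreover have "(\<lambda>k. \<bar>x k\<bar> powr p / (A * p) + \<bar>y k\<bar> powr q / (B * q)) sums 1"
    proof -
      have "(\<lambda>k. \<bar>x k\<bar> powr p / (A * p) + \<bar>y k\<bar> powr q / (B * q)) sums (A / (A * p) + B / (B * q))"
        using x y by (intro sums_add sums_divide) (auto simp: A_def B_def summable_sums)
      then show ?thesis
        using \<open>A > 0\<close> \<open>B > 0\<close> pq by simp
    qed
    ultimately have "(\<Sum>k. \<bar>x k * y k\<bar> / (a * b)) \<le> 1"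
      by (intro sums_le[OF _ summable_sums[OF summable_divide[OF xy]]])
    then show ?thesis
      using \<open>a > 0\<close> \<open>b > 0\<close> xy by (simp add: suminf_divide a_def b_def)
  qed
qed

lemma sum_powr_le_of_dual_bound:
  fixes y :: "nat \<Rightarrow> real"
  assumes p: "1 < p" and q: "1 < q" and pq: "1/p + 1/q = 1" and y: "\<And>k. 0 \<le> y k"
    and bound: "\<And>x. \<bar>\<Sum>k<N. x k * y k\<bar> \<le> C * (\<Sum>k<N. \<bar>x k\<bar> powr p) powr (1/p)"
  shows "(\<Sum>k<N. y k powr q) \<le> C powr q"
proof -
  define S where "S = (\<Sum>k<N. y k powr q)"
  have "p * (q - 1) = q"
    using pq p q by (simp add: field_simps)
  then have "\<bar>y k powr (q - 1)\<bar> powr p = y k powr q" for k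
    by (simp add: powr_powr mult.commute)
  moreover have "y k powr (q - 1) * y k = y k powr q" for k
    using y[of k] by (cases "y k = 0") (auto simp: powr_diff)
  \<comment> \<open>Test the bound on the extremal sequence y^(q-1).\<close>
  ultimately have "S \<le> C * S powr (1/p)"
    using bound[of "\<lambda>k. y k powr (q - 1)"] y by (simp add: S_def sum_nonneg)
  show ?thesis
  proof (cases "S = 0")
    case False
    then have "S > 0" by (simp add: S_def sum_nonneg order_le_neq_trans)
    have "S powr (1/p) * S powr (1/q) \<le> S powr (1/p) * C"
      using \<open>S \<le> C * S powr (1/p)\<close> \<open>S > 0\<close> pq by (simp add: powr_add[symmetric] mult.commute)
    then have "S powr (1/q) \<le> C"
      using \<open>S > 0\<close> by simp
    then have "(S powr (1/q)) powr q \<le> C powr q"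
      using q by (intro powr_mono2) auto
    then show ?thesis
      using \<open>S > 0\<close> q by (simp add: powr_powr S_def)
  qed (simp add: S_def)
qed

lemma powr_le_diff_quotient:
  fixes x s :: real
  assumes x: "1 < x" and s: "s < 1" "s \<noteq> 0"
  shows "x powr (s - 1) \<le> (x powr s - (x - 1) powr s) / s"
proof -
  have "((\<lambda>t. t powr s) has_real_derivative s * t powr (s - 1)) (at t)" if "x - 1 \<le> t" for t
    using that x by (intro has_real_derivative_powr) auto
  then obtain z where z: "x - 1 < z" "z < x" and mvt: "x powr s - (x - 1) powr s = s * z powr (s - 1)"
    using MVT2[of "x - 1" x "\<lambda>t. t powr s" "\<lambda>t. s * t powr (s - 1)"] by auto
  have "x powr (s - 1) \<le> z powr (s - 1)"
    using z x s by (intro powr_mono2') auto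
  then show ?thesis
    using mvt s by simp
qed

lemma sum_powr_atLeast1_le:
  fixes b :: real
  assumes b: "-1 < b"
  shows "(\<Sum>m=1..n. real m powr b) \<le> max 1 (1 / (b + 1)) * real n powr (b + 1)"
proof (cases "b < 0")
  case True
  have "(\<Sum>m=1..n. real m powr b) \<le> real n powr (b + 1) / (b + 1)"
  proof (induction n)
    case (Suc n)
    have "real (Suc n) powr b \<le> (real (Suc n) powr (b + 1) - real n powr (b + 1)) / (b + 1)"
      using powr_le_diff_quotient[of "real (Suc n)" "b + 1"] b True
      by (cases "n = 0") auto
    then show ?case
      using Suc by (simp add: diff_divide_distrib)
  qed simp
  also have "\<dots> \<le> max 1 (1 / (b + 1)) * real n powr (b + 1)"
    by (simp add: divide_inverse mult.commute mult_right_mono)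
  finally show ?thesis .
next
  case False
  have "(\<Sum>m=1..n. real m powr b) \<le> (\<Sum>m=1..n. real n powr b)"
    using False by (intro sum_mono powr_mono2) auto
  also have "\<dots> = real n powr (b + 1)"
    by (cases "n = 0") (auto simp: powr_add)
  also have "\<dots> \<le> max 1 (1 / (b + 1)) * real n powr (b + 1)"
    using mult_right_mono[of 1 "max 1 (1 / (b + 1))" "real n powr (b + 1)"] by simp
  finally show ?thesis .
qed

lemma sum_powr_tail_le:
  fixes s :: real
  assumes s: "s < -1" and n: "1 \<le> n"
  shows "(\<Sum>m=Suc n..N. real m powr s) \<le> real n powr (s + 1) / - (s + 1)"
proof (cases "n \<le> N")
  case True
  then have "(\<Sum>m=Suc n..N. real m powr s) \<le> (real n powr (s + 1) - real N powr (s + 1)) / - (s + 1)"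
  proof (induction N rule: dec_induct)
    case (step k)
    have "real (Suc k) powr s \<le> (real (Suc k) powr (s + 1) - real k powr (s + 1)) / (s + 1)"
      using powr_le_diff_quotient[of "real (Suc k)" "s + 1"] s step n by simp
    also have "\<dots> = (real k powr (s + 1) - real (Suc k) powr (s + 1)) / - (s + 1)"
      using s by (simp add: field_simps)
    finally show ?case
      using step by (simp add: diff_divide_distrib)
  qed simp
  also have "\<dots> \<le> real n powr (s + 1) / - (s + 1)"
    using s by (simp add: divide_right_mono)
  finally show ?thesis .
qed (use s in simp)

lemma powr_le_of_comparable:
  fixes x y c d :: real
  assumes x: "0 < x" and xy: "x \<le> y" and yx: "y \<le> c * x"
  shows "y powr d \<le> c powr \<bar>d\<bar> * x powr d" and "x powr d \<le> c powr \<bar>d\<bar> * y powr d"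
proof -
  have "1 \<le> c"
    using x xy yx by (metis mult_le_cancel_right1 order.trans)
  then have c: "1 \<le> c powr \<bar>d\<bar>"
    by (simp add: ge_one_powr_ge_zero)
  show "y powr d \<le> c powr \<bar>d\<bar> * x powr d"
  proof (cases "0 \<le> d")
    case True
    have "y powr d \<le> (c * x) powr d"
      using True x xy yx by (intro powr_mono2) auto
    then show ?thesis
      using True x \<open>1 \<le> c\<close> by (simp add: powr_mult)
  next
    case False
    have "y powr d \<le> x powr d"
      using False x xy by (intro powr_mono2') auto
    then show ?thesis
      using c by (smt (verit) mult_le_cancel_right1 powr_ge_zero)
  qed
  show "x powr d \<le> c powr \<bar>d\<bar> * y powr d"
  proof (cases "0 \<le> d")
    case True
    have "x powr d \<le> y powr d"
      using True x xy by (intro powr_mono2) auto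
    then show ?thesis
      using c by (smt (verit) mult_le_cancel_right1 powr_ge_zero)
  next
    case False
    have "x powr d \<le> (y / c) powr d"
      using False x xy yx \<open>1 \<le> c\<close> by (intro powr_mono2') (auto simp: field_simps)
    also have "(y / c) powr d = c powr \<bar>d\<bar> * y powr d"
      using False x xy \<open>1 \<le> c\<close> by (simp add: powr_divide powr_minus field_simps)
    finally show ?thesis .
  qed
qed

lemma powr_bounded_imp_nonpos:
  fixes s K :: real
  assumes bound: "\<And>n. 1 \<le> n \<Longrightarrow> real n powr s \<le> K"
  shows "s \<le> 0"
proof (rule ccontr)
  assume "\<not> s \<le> 0"
  then have "filterlim (\<lambda>n. real n powr s) at_top sequentially"
    using filterlim_compose[OF real_powr_at_top filterlim_real_sequentially] by simp
  then have "eventually (\<lambda>n. K + 1 \<le> real n powr s \<and> 1 \<le> n) sequentially"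
    by (intro eventually_conj eventually_ge_at_top) (simp add: filterlim_at_top)
  then obtain n where "K + 1 \<le> real n powr s" "1 \<le> n"
    using eventually_sequentially by auto
  then show False
    using bound by fastforce
qed

definition hilbert_kernel :: "real \<Rightarrow> real \<Rightarrow> real \<Rightarrow> nat \<Rightarrow> nat \<Rightarrow> real" where
  "hilbert_kernel b g d n m = real m powr b * real n powr g / (real m + real n) powr d"

lemma hilbert_kernel_nonneg: "0 \<le> hilbert_kernel b g d n m"
  by (simp add: hilbert_kernel_def)

lemma hilbert_kernel_powr:
  "hilbert_kernel b g d n m powr q = hilbert_kernel (q * b) (q * g) (q * d) n m"
  by (simp add: hilbert_kernel_def powr_mult powr_divide powr_powr mult.commute)

lemma hilbert_kernel_head_sum_le:
  assumes b: "-1 < b" and d: "0 \<le> d" and bgd: "b + g + 1 \<le> d" and n: "1 \<le> n"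
  shows "(\<Sum>m=1..n. hilbert_kernel b g d n m) \<le> max 1 (1 / (b + 1))"
proof -
  have "hilbert_kernel b g d n m \<le> real n powr (g - d) * real m powr b" for m
  proof -
    have "real n powr d \<le> (real m + real n) powr d"
      using d by (intro powr_mono2) auto
    then have "hilbert_kernel b g d n m \<le> real m powr b * real n powr g / real n powr d"
      unfolding hilbert_kernel_def using n by (intro divide_left_mono) auto
    then show ?thesis
      by (simp add: powr_diff mult_ac)
  qed
  then have "(\<Sum>m=1..n. hilbert_kernel b g d n m) \<le> real n powr (g - d) * (\<Sum>m=1..n. real m powr b)"
    by (simp add: sum_distrib_left sum_mono)
  also have "\<dots> \<le> real n powr (g - d) * (max 1 (1 / (b + 1)) * real n powr (b + 1))"
    by (intro mult_left_mono sum_powr_atLeast1_le b) auto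
  also have "\<dots> = max 1 (1 / (b + 1)) * real n powr (b + g + 1 - d)"
    using n by (simp add: powr_add[symmetric] algebra_simps)
  also have "\<dots> \<le> max 1 (1 / (b + 1))"
    using powr_mono[of "b + g + 1 - d" 0 "real n"] n bgd by (intro mult_left_le) auto
  finally show ?thesis .
qed

lemma hilbert_kernel_tail_sum_le:
  assumes d: "0 \<le> d" and bd: "b + 1 < d" and bgd: "b + g + 1 \<le> d" and n: "1 \<le> n"
  shows "(\<Sum>m=Suc n..N. hilbert_kernel b g d n m) \<le> 1 / (d - b - 1)"
proof -
  have "hilbert_kernel b g d n m \<le> real n powr g * real m powr (b - d)" if "Suc n \<le> m" for m
  proof -
    have "real m powr d \<le> (real m + real n) powr d"
      using d by (intro powr_mono2) auto
    then have "hilbert_kernel b g d n m \<le> real m powr b * real n powr g / real m powr d"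
      unfolding hilbert_kernel_def using that by (intro divide_left_mono) auto
    then show ?thesis
      by (simp add: powr_diff mult_ac)
  qed
  then have "(\<Sum>m=Suc n..N. hilbert_kernel b g d n m) \<le> real n powr g * (\<Sum>m=Suc n..N. real m powr (b - d))"
    unfolding sum_distrib_left by (auto intro!: sum_mono)
  also have "\<dots> \<le> real n powr g * (real n powr (b - d + 1) / - (b - d + 1))"
    using bd n by (intro mult_left_mono sum_powr_tail_le) auto
  also have "\<dots> = real n powr (b + g + 1 - d) / (d - b - 1)"
    using n by (simp add: powr_add[symmetric] algebra_simps)
  also have "\<dots> \<le> 1 / (d - b - 1)"
    using powr_mono[of "b + g + 1 - d" 0 "real n"] n bgd bd by (intro divide_right_mono) auto
  finally show ?thesis .
qed

lemma hilbert_kernel_sum_le: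
  assumes b: "-1 < b" and bd: "b + 1 < d" and bgd: "b + g + 1 \<le> d" and n: "1 \<le> n"
  shows "(\<Sum>m=1..N. hilbert_kernel b g d n m) \<le> max 1 (1 / (b + 1)) + 1 / (d - b - 1)"
proof -
  have "(\<Sum>m=1..N. hilbert_kernel b g d n m) \<le> (\<Sum>m\<in>{1..n} \<union> {Suc n..N}. hilbert_kernel b g d n m)"
    by (intro sum_mono2) (auto simp: hilbert_kernel_nonneg)
  also have "\<dots> = (\<Sum>m=1..n. hilbert_kernel b g d n m) + (\<Sum>m=Suc n..N. hilbert_kernel b g d n m)"
    by (intro sum.union_disjoint) auto
  also have "\<dots> \<le> max 1 (1 / (b + 1)) + 1 / (d - b - 1)"
    using b bd bgd n by (intro add_mono hilbert_kernel_head_sum_le hilbert_kernel_tail_sum_le) auto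
  finally show ?thesis .
qed

lemma hilbert_kernel_sums_bounded_imp_less:
  assumes bound: "\<And>N. (\<Sum>m=1..N. hilbert_kernel b g d 1 m) \<le> M"
  shows "b + 1 < d"
proof -
  have le: "real m powr (b - d) \<le> 2 powr \<bar>d\<bar> * hilbert_kernel b g d 1 m" if "1 \<le> m" for m
  proof -
    have "(real m + 1) powr d \<le> 2 powr \<bar>d\<bar> * real m powr d"
      using powr_le_of_comparable(1)[of "real m" "real m + 1" 2 d] that by simp
    then have "real m powr b / real m powr d \<le> 2 powr \<bar>d\<bar> * real m powr b / (real m + 1) powr d"
      using that by (simp add: field_simps mult_left_mono)
    then show ?thesis
      by (simp add: hilbert_kernel_def powr_diff)
  qed
  have "summable (\<lambda>k. real (Suc k) powr (b - d))"
  proof (rule summableI_nonneg_bounded)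
    show "(\<Sum>k<N. real (Suc k) powr (b - d)) \<le> 2 powr \<bar>d\<bar> * M" for N
    proof -
      have "(\<Sum>k<N. real (Suc k) powr (b - d)) = (\<Sum>m=1..N. real m powr (b - d))"
        by (simp add: sum.atLeast1_atMost_eq)
      also have "\<dots> \<le> 2 powr \<bar>d\<bar> * (\<Sum>m=1..N. hilbert_kernel b g d 1 m)"
        unfolding sum_distrib_left by (intro sum_mono le) auto
      also have "\<dots> \<le> 2 powr \<bar>d\<bar> * M"
        using bound by (intro mult_left_mono) auto
      finally show ?thesis .
    qed
  qed simp
  then have "summable (\<lambda>m. real m powr (b - d))"
    by (subst summable_Suc_iff[symmetric]) simp
  then have "b - d < -1"
    by (simp add: summable_real_powr_iff)
  then show ?thesis by simp
qed

lemma hilbert_kernel_sums_bounded_imp_le: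
  assumes bound: "\<And>n N. 1 \<le> n \<Longrightarrow> (\<Sum>m=1..N. hilbert_kernel b g d n m) \<le> M"
  shows "b + g + 1 \<le> d"
proof -
  define c where "c = 1 / (2 powr \<bar>b\<bar> * 3 powr \<bar>d\<bar>)"
  have "c > 0"
    by (simp add: c_def)
  have le: "c * real n powr (b + g - d) \<le> hilbert_kernel b g d n m"
    if n: "1 \<le> n" and m: "n \<le> m" "m \<le> 2 * n" for n m
  proof -
    have "real n powr b \<le> 2 powr \<bar>b\<bar> * real m powr b"
      using powr_le_of_comparable(2)[of "real n" "real m" 2 b] n m by simp
    moreover have "(real m + real n) powr d \<le> 3 powr \<bar>d\<bar> * real n powr d"
      using powr_le_of_comparable(1)[of "real n" "real m + real n" 3 d] n m by simp
    ultimately have "real n powr b * (real m + real n) powr d * real n powr g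
        \<le> (2 powr \<bar>b\<bar> * real m powr b) * (3 powr \<bar>d\<bar> * real n powr d) * real n powr g"
      by (intro mult_right_mono mult_mono) auto
    then show ?thesis
      using n m by (simp add: c_def hilbert_kernel_def powr_add powr_diff field_simps)
  qed
  have "c * real n powr (b + g - d + 1) \<le> M" if n: "1 \<le> n" for n
  proof -
    have "c * real n powr (b + g - d + 1) = real n * (c * real n powr (b + g - d))"
      using n by (simp add: powr_add)
    also have "\<dots> \<le> (\<Sum>m=n..2*n. c * real n powr (b + g - d))"
      using \<open>c > 0\<close> by (simp add: mult_right_mono)
    also have "\<dots> \<le> (\<Sum>m=n..2*n. hilbert_kernel b g d n m)"
      using n by (intro sum_mono le) auto
    also have "\<dots> \<le> (\<Sum>m=1..2*n. hilbert_kernel b g d n m)"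
      using n by (intro sum_mono2) (auto simp: hilbert_kernel_nonneg)
    also have "\<dots> \<le> M"
      using bound n by blast
    finally show ?thesis .
  qed
  then have "b + g - d + 1 \<le> 0"
    using \<open>c > 0\<close> by (intro powr_bounded_imp_nonpos[of _ "M / c"]) (simp add: field_simps)
  then show ?thesis by simp
qed

lemma hilbert_kernel_sums_bounded_iff:
  assumes b: "-1 < b"
  shows "(\<exists>M. \<forall>n\<ge>1. \<forall>N. (\<Sum>m=1..N. hilbert_kernel b g d n m) \<le> M) \<longleftrightarrow> b + 1 < d \<and> b + g + 1 \<le> d"
proof
  assume "\<exists>M. \<forall>n\<ge>1. \<forall>N. (\<Sum>m=1..N. hilbert_kernel b g d n m) \<le> M"
  then obtain M where "\<And>n N. 1 \<le> n \<Longrightarrow> (\<Sum>m=1..N. hilbert_kernel b g d n m) \<le> M"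
    by blast
  then show "b + 1 < d \<and> b + g + 1 \<le> d"
    using hilbert_kernel_sums_bounded_imp_less hilbert_kernel_sums_bounded_imp_le by blast
next
  assume "b + 1 < d \<and> b + g + 1 \<le> d"
  then show "\<exists>M. \<forall>n\<ge>1. \<forall>N. (\<Sum>m=1..N. hilbert_kernel b g d n m) \<le> M"
    using hilbert_kernel_sum_le b by blast
qed

lemma H_term_eq_hilbert_kernel:
  "H_term lam \<mu> \<nu> a n m = hilbert_kernel (\<mu> - s) \<nu> lam n m * (real m powr s * a m)"
proof -
  have "real m powr \<mu> = real m powr (\<mu> - s) * real m powr s"
    by (simp add: powr_add[symmetric])
  then show ?thesis
    by (simp add: H_term_def hilbert_kernel_def)
qed

lemma weighted_abs_powr:
  fixes p \<alpha> a :: real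
  assumes "p \<noteq> 0"
  shows "real m powr \<alpha> * \<bar>a\<bar> powr p = \<bar>real m powr (\<alpha> / p) * a\<bar> powr p"
  using assms by (simp add: abs_mult powr_mult powr_powr)

lemma H_bounded_imp_hilbert_kernel_bounded:
  assumes p: "1 < p" and q: "1 < q" and pq: "1/p + 1/q = 1"
    and H: "H_bounded_lpw_linf lam \<mu> \<nu> p \<alpha>"
  shows "\<exists>M. \<forall>n\<ge>1. \<forall>N. (\<Sum>m=1..N. hilbert_kernel (\<mu> - \<alpha>/p) \<nu> lam n m powr q) \<le> M"
proof -
  have p_neq_0: "p \<noteq> 0"
    using p by simp
  obtain C where C: "\<And>a n. in_lpw p \<alpha> a \<Longrightarrow> 1 \<le> n \<Longrightarrow> \<bar>H_op lam \<mu> \<nu> a n\<bar> \<le> C * lpw_norm p \<alpha> a"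
    using H unfolding H_bounded_lpw_linf_def by blast
  have "(\<Sum>k<N. hilbert_kernel (\<mu> - \<alpha>/p) \<nu> lam n (Suc k) powr q) \<le> C powr q" if n: "1 \<le> n" for n N
  proof (rule sum_powr_le_of_dual_bound[OF p q pq hilbert_kernel_nonneg])
    fix x :: "nat \<Rightarrow> real"
    define a where "a m = (if m \<in> {1..N} then real m powr (- (\<alpha>/p)) * x (m - 1) else 0)" for m
    have a: "real (Suc k) powr (\<alpha>/p) * a (Suc k) = (if k \<in> {..<N} then x k else 0)" for k
      by (simp add: a_def powr_minus)
    have "real (Suc k) powr \<alpha> * \<bar>a (Suc k)\<bar> powr p = (if k \<in> {..<N} then \<bar>x k\<bar> powr p else 0)" for k
      unfolding weighted_abs_powr[OF p_neq_0] a by simp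
    then have "(\<lambda>k. real (Suc k) powr \<alpha> * \<bar>a (Suc k)\<bar> powr p) sums (\<Sum>k<N. \<bar>x k\<bar> powr p)"
      using sums_If_finite_set[of "{..<N}" "\<lambda>k. \<bar>x k\<bar> powr p"] by simp
    then have a_lpw: "in_lpw p \<alpha> a" and a_norm: "lpw_norm p \<alpha> a = (\<Sum>k<N. \<bar>x k\<bar> powr p) powr (1/p)"
      unfolding in_lpw_def lpw_norm_def by (auto simp: sums_iff)
    have "H_term lam \<mu> \<nu> a n (Suc k)
        = (if k \<in> {..<N} then x k * hilbert_kernel (\<mu> - \<alpha>/p) \<nu> lam n (Suc k) else 0)" for k
      unfolding H_term_eq_hilbert_kernel[where s = "\<alpha>/p"] a by simp
    then have "(\<lambda>k. H_term lam \<mu> \<nu> a n (Suc k))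
        sums (\<Sum>k<N. x k * hilbert_kernel (\<mu> - \<alpha>/p) \<nu> lam n (Suc k))"
      using sums_If_finite_set[of "{..<N}" "\<lambda>k. x k * hilbert_kernel (\<mu> - \<alpha>/p) \<nu> lam n (Suc k)"]
      by simp
    then show "\<bar>\<Sum>k<N. x k * hilbert_kernel (\<mu> - \<alpha>/p) \<nu> lam n (Suc k)\<bar>
        \<le> C * (\<Sum>k<N. \<bar>x k\<bar> powr p) powr (1/p)"
      using C[OF a_lpw n] a_norm unfolding H_op_def by (simp add: sums_iff)
  qed
  then show ?thesis
    by (intro exI[of _ "C powr q"]) (simp add: sum.atLeast1_atMost_eq)
qed

lemma hilbert_kernel_bounded_imp_H_bounded:
  assumes p: "1 < p" and q: "1 < q" and pq: "1/p + 1/q = 1"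
    and M: "\<And>n N. 1 \<le> n \<Longrightarrow> (\<Sum>m=1..N. hilbert_kernel (\<mu> - \<alpha>/p) \<nu> lam n m powr q) \<le> M"
  shows "H_bounded_lpw_linf lam \<mu> \<nu> p \<alpha>"
proof -
  have "summable (\<lambda>k. H_term lam \<mu> \<nu> a n (Suc k)) \<and>
      \<bar>H_op lam \<mu> \<nu> a n\<bar> \<le> M powr (1/q) * lpw_norm p \<alpha> a"
    if a: "in_lpw p \<alpha> a" and n: "1 \<le> n" for a n
  proof -
    define x where "x k = real (Suc k) powr (\<alpha>/p) * a (Suc k)" for k
    define y where "y k = hilbert_kernel (\<mu> - \<alpha>/p) \<nu> lam n (Suc k)" for k
    have "real (Suc k) powr \<alpha> * \<bar>a (Suc k)\<bar> powr p = \<bar>x k\<bar> powr p" for k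
      unfolding x_def using p by (intro weighted_abs_powr) simp
    then have x: "summable (\<lambda>k. \<bar>x k\<bar> powr p)" "lpw_norm p \<alpha> a = (\<Sum>k. \<bar>x k\<bar> powr p) powr (1/p)"
      using a unfolding in_lpw_def lpw_norm_def by simp_all
    have y_partial: "(\<Sum>k<N. \<bar>y k\<bar> powr q) \<le> M" for N
      using M[OF n, of N] by (simp add: y_def hilbert_kernel_nonneg sum.atLeast1_atMost_eq)
    then have y: "summable (\<lambda>k. \<bar>y k\<bar> powr q)"
      by (intro summableI_nonneg_bounded) auto
    have H: "H_term lam \<mu> \<nu> a n (Suc k) = x k * y k" for k
      by (simp add: H_term_eq_hilbert_kernel[where s = "\<alpha>/p"] x_def y_def)
    have "(\<Sum>k. \<bar>x k * y k\<bar>) \<le> lpw_norm p \<alpha> a * (\<Sum>k. \<bar>y k\<bar> powr q) powr (1/q)"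
      using Hoelder_inequality_suminf(2)[OF p q pq x(1) y] x(2) by simp
    also have "\<dots> \<le> lpw_norm p \<alpha> a * M powr (1/q)"
      using suminf_le_const[OF y y_partial] y q
      by (intro mult_left_mono powr_mono2) (auto simp: lpw_norm_def suminf_nonneg)
    finally have le: "(\<Sum>k. \<bar>H_term lam \<mu> \<nu> a n (Suc k)\<bar>) \<le> M powr (1/q) * lpw_norm p \<alpha> a"
      by (simp add: H mult.commute)
    have abs_summable: "summable (\<lambda>k. \<bar>H_term lam \<mu> \<nu> a n (Suc k)\<bar>)"
      using Hoelder_inequality_suminf(1)[OF p q pq x(1) y] by (simp add: H)
    show ?thesis
      unfolding H_op_def using summable_rabs_cancel[OF abs_summable]
        order.trans[OF summable_rabs[OF abs_summable] le] by blast
  qed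
  then show ?thesis
    unfolding H_bounded_lpw_linf_def by blast
qed

lemma H_bounded_lpw_linf_iff_hilbert_kernel_sums_bounded:
  assumes p: "1 < p" and q: "1 < q" and pq: "1/p + 1/q = 1"
  shows "H_bounded_lpw_linf lam \<mu> \<nu> p \<alpha> \<longleftrightarrow>
    (\<exists>M. \<forall>n\<ge>1. \<forall>N. (\<Sum>m=1..N. hilbert_kernel (q * (\<mu> - \<alpha>/p)) (q * \<nu>) (q * lam) n m) \<le> M)"
  using H_bounded_imp_hilbert_kernel_bounded[OF p q pq, of lam \<mu> \<nu> \<alpha>]
    hilbert_kernel_bounded_imp_H_bounded[OF p q pq, where lam = lam and \<mu> = \<mu> and \<nu> = \<nu> and \<alpha> = \<alpha>]
  unfolding hilbert_kernel_powr by blast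

theorem theorem1p8:
  fixes p lam \<mu> \<nu> \<alpha> :: real
  assumes "1 < p" and "\<alpha> + 1 < p * (\<mu> + 1)"
  shows "H_bounded_lpw_linf lam \<mu> \<nu> p \<alpha> \<longleftrightarrow>
           (lam \<ge> \<mu> + \<nu> + 1 - (\<alpha> + 1) / p \<and> p * (\<mu> + 1 - lam) < \<alpha> + 1)"
proof -
  define q where "q = p / (p - 1)"
  have q: "1 < q" and pq: "1/p + 1/q = 1"
    using assms(1) by (auto simp: q_def field_simps)
  define b where "b = q * (\<mu> - \<alpha>/p)"
  have b_eq: "b = q * (\<mu> + 1 - (\<alpha> + 1) / p) - 1"
    using assms(1) by (simp add: b_def q_def field_simps)
  have "(\<alpha> + 1) / p < \<mu> + 1"
    using assms by (simp add: pos_divide_less_eq mult.commute)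
  then have "-1 < b"
    using b_eq q by simp
  have "H_bounded_lpw_linf lam \<mu> \<nu> p \<alpha> \<longleftrightarrow>
      (\<exists>M. \<forall>n\<ge>1. \<forall>N. (\<Sum>m=1..N. hilbert_kernel b (q * \<nu>) (q * lam) n m) \<le> M)"
    unfolding b_def using assms(1) q pq by (rule H_bounded_lpw_linf_iff_hilbert_kernel_sums_bounded)
  also have "\<dots> \<longleftrightarrow> b + 1 < q * lam \<and> b + q * \<nu> + 1 \<le> q * lam"
    using \<open>-1 < b\<close> by (rule hilbert_kernel_sums_bounded_iff)
  also have "\<dots> \<longleftrightarrow> q * (\<mu> + 1 - (\<alpha> + 1) / p) < q * lam \<and>
      q * (\<mu> + \<nu> + 1 - (\<alpha> + 1) / p) \<le> q * lam"
    by (simp add: b_eq algebra_simps)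
  also have "\<dots> \<longleftrightarrow> \<mu> + 1 - (\<alpha> + 1) / p < lam \<and> \<mu> + \<nu> + 1 - (\<alpha> + 1) / p \<le> lam"
    using q by simp
  also have "\<dots> \<longleftrightarrow> lam \<ge> \<mu> + \<nu> + 1 - (\<alpha> + 1) / p \<and> p * (\<mu> + 1 - lam) < \<alpha> + 1"
    using assms(1) by (auto simp: field_simps)
  finally show ?thesis .
qed

end
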